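(* Let $k\ge2$, let $r=2^k$, and let $T_r$ be the $(k,r)$-tree, with $n=|T_r|$ nodes. Let $X$ be the atomic strongly-stable sequence with respect to $T_r$, whose length is $m=2^{rk}$. Then, as $k\to\infty$, $$\mathrm{cost}(OPT,X,T_r)=\Theta\Big(m\cdot\frac{\lg n}{\lg\lg\lg n}\Big).$$
   Context: $\lg$ is the base-2 logarithm. Binary search tree model. An algorithm $A$ serves a query sequence $X=[x_1,\dots,x_m]$ from an initial BST $T_0$. Before serving $x_t$ it holds a BST $T_{t-1}$; it searches $x_t$ from the root and may then restructure the tree by rotations into $T_t$. Let $P_t$ be the set of nodes on the root-to-$x_t$ path of $T_{t-1}$, and let $U_t$ be the node set of the minimal subtree containing all edges rotated in transforming $T_{t-1}$ into $T_t$. The cost at time $t$ is $|P_t\cup U_t|$, and $\mathrm{cost}(A,X,T_0)$ is the sum of these costs. $OPT$ denotes an algorithm of minimum cost on $(X,T_0)$ that knows all of $X$ in advance. $(k,r)$-trees. Let $k\ge2$ and $r\ge0$ be integers. $T_0$ is a single node. For $r\ge1$, $T_r$ has $k$ trunk nodes $w_1,\dots,w_k$: $w_1$ is the root, $w_2$ is the right child of $w_1$, and $w_{j+1}$ is the left child of $w_j$ for $2\le j\le k-1$. The left child of $w_k$ is a single leaf (the actual leaf). Each of the remaining $k$ child positions of trunk nodes (the left child of $w_1$ and the right child of $w_j$ for $2\le j\le k$) is the root of a copy of $T_{r-1}$. Keys are $1,\dots,|T_r|$ in symmetric order. Stable sequences. Let $T$ be a full binary search tree, and let $X$ be a query sequence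 consisting only of keys stored at leaves of $T$. For an inner node $v$, let $X_v$ be the subsequence of $X$ consisting of the queries to keys in the subtree of $v$. The node $v$ is strongly-stable if consecutive queries of $X_v$ alternate between the left and right subtrees of $v$. $X$ is strongly-stable if every inner node of $T$ is strongly-stable. The atomic sequence is the shortest such sequence all of whose repetitions are again strongly-stable for $T$. *)

theory Defs
  imports Complex_Main "HOL-Library.Tree"
begin

fun subt :: "nat tree \<Rightarrow> nat \<Rightarrow> nat tree" where
  "subt Leaf v = Leaf"
| "subt (Node l a r) v =
     (if v = a then Node l a r else if v < a then subt l v else subt r v)"

definition anc :: "nat tree \<Rightarrow> nat \<Rightarrow> nat \<Rightarrow> bool" where
  "anc T v w \<longleftrightarrow> v \<in> set_tree T \<and> w \<in> set_tree (subt T v)"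

definition path_nodes :: "nat tree \<Rightarrow> nat \<Rightarrow> nat set" where
  "path_nodes T x = {v. anc T v x}"

text \<open>Node set of the minimal (connected) subtree of T containing all nodes of S.\<close>
definition min_subtree :: "nat tree \<Rightarrow> nat set \<Rightarrow> nat set" where
  "min_subtree T S = {v. (\<exists>s\<in>S. anc T v s) \<and> (\<forall>w. (\<forall>s\<in>S. anc T w s) \<longrightarrow> anc T w v)}"

inductive rot :: "nat tree \<Rightarrow> nat \<times> nat \<Rightarrow> nat tree \<Rightarrow> bool" where
  rotR: "rot (Node (Node A x B) y C) (x, y) (Node A x (Node B y C))"
| rotL: "rot (Node A x (Node B y C)) (x, y) (Node (Node A x B) y C)"
| inL: "rot l e l' \<Longrightarrow> rot (Node l a r) e (Node l' a r)"
| inR: "rot r e r' \<Longrightarrow> rot (Node l a r) e (Node l a r')"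

inductive rots :: "nat tree \<Rightarrow> (nat \<times> nat) list \<Rightarrow> nat tree \<Rightarrow> bool" where
  rots_nil: "rots T [] T"
| rots_cons: "rot T e T1 \<Longrightarrow> rots T1 es T2 \<Longrightarrow> rots T (e # es) T2"

definition edge_nodes :: "(nat \<times> nat) list \<Rightarrow> nat set" where
  "edge_nodes es = fst ` set es \<union> snd ` set es"

text \<open>Cost |P_t \<union> U_t| of searching x in T and then performing rotations es.\<close>
definition step_cost :: "nat tree \<Rightarrow> nat \<Rightarrow> (nat \<times> nat) list \<Rightarrow> nat" where
  "step_cost T x es = card (path_nodes T x \<union> min_subtree T (edge_nodes es))"

text \<open>exec T X c: some (offline) algorithm serves X from initial tree T with total cost c.\<close>
inductive exec :: "nat tree \<Rightarrow> nat list \<Rightarrow> nat \<Rightarrow> bool" where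
  exec_nil: "exec T [] 0"
| exec_cons: "rots T es T' \<Longrightarrow> exec T' xs c \<Longrightarrow> exec T (x # xs) (step_cost T x es + c)"

definition opt_cost :: "nat tree \<Rightarrow> nat list \<Rightarrow> nat" where
  "opt_cost T X = (LEAST c. exec T X c)"

text \<open>chain i S: trunk nodes w_{k-i+1},...,w_k (i of them), each with right child S,
  the last one with the actual leaf as left child.\<close>
fun chain :: "nat \<Rightarrow> unit tree \<Rightarrow> unit tree" where
  "chain 0 S = Node Leaf () Leaf"
| "chain (Suc i) S = Node (chain i S) () S"

fun kr_shape :: "nat \<Rightarrow> nat \<Rightarrow> unit tree" where
  "kr_shape k 0 = Node Leaf () Leaf"
| "kr_shape k (Suc r) = Node (kr_shape k r) () (chain (k - 1) (kr_shape k r))"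

fun lab :: "unit tree \<Rightarrow> nat \<Rightarrow> nat tree" where
  "lab Leaf i = Leaf"
| "lab (Node l _ r) i = Node (lab l i) (i + size l) (lab r (i + size l + 1))"

definition kr_tree :: "nat \<Rightarrow> nat \<Rightarrow> nat tree" where
  "kr_tree k r = lab (kr_shape k r) 1"

definition leaf_keys :: "nat tree \<Rightarrow> nat set" where
  "leaf_keys T = {v \<in> set_tree T. subt T v = Node Leaf v Leaf}"

definition inner_keys :: "nat tree \<Rightarrow> nat set" where
  "inner_keys T = {v \<in> set_tree T. subt T v \<noteq> Node Leaf v Leaf}"

definition strongly_stable_node :: "nat tree \<Rightarrow> nat list \<Rightarrow> nat \<Rightarrow> bool" where
  "strongly_stable_node T X v =
     (case subt T v of
        Leaf \<Rightarrow> True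
      | Node l _ r \<Rightarrow>
          (let Xv = filter (\<lambda>x. x \<in> set_tree (subt T v)) X in
           \<forall>i. Suc i < length Xv \<longrightarrow>
               ((Xv ! i \<in> set_tree l \<and> Xv ! Suc i \<in> set_tree r) \<or>
                (Xv ! i \<in> set_tree r \<and> Xv ! Suc i \<in> set_tree l))))"

definition strongly_stable :: "nat tree \<Rightarrow> nat list \<Rightarrow> bool" where
  "strongly_stable T X \<longleftrightarrow>
     set X \<subseteq> leaf_keys T \<and> (\<forall>v \<in> inner_keys T. strongly_stable_node T X v)"

definition rep_stable :: "nat tree \<Rightarrow> nat list \<Rightarrow> bool" where
  "rep_stable T X \<longleftrightarrow> (\<forall>j\<ge>1. strongly_stable T (concat (replicate j X)))"

definition atomic_seq :: "nat tree \<Rightarrow> nat list \<Rightarrow> bool" where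
  "atomic_seq T X \<longleftrightarrow> X \<noteq> [] \<and> rep_stable T X \<and>
     (\<forall>Y. Y \<noteq> [] \<and> rep_stable T Y \<longrightarrow> length X \<le> length Y)"

end

theory Submission
  imports Defs
begin

text \<open>
  Upper bound: serve X with the static tree T_r.  In a strongly-stable sequence every child
  subtree receives exactly half of the queries of its parent's subtree, so the total search cost is
  m (w + 1), where w is the expected number of inner nodes on a root-to-leaf path chosen by fair
  coin flips.

  Lower bound (Wilber's interleave bound with T_r as reference tree): split the subtree of an
  inner node y of T_r into its left part (y and its left subtree) and its right part.  The
  transition point of y in the current tree is the topmost node of one part that is not an ancestor
  of the other part.  Transition points of distinct y are distinct, a query on the same side of y as
  the transition point must pass through it, and the point only moves when the algorithm rotates it.
  Since the queries below y alternate sides, every second one costs one unit charged to y, giving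
  cost \<ge> m w / 2.

  For the (k,2^k)-tree a random path ends inside the trunk of a level with probability 2^-k and
  otherwise meets about two inner nodes there before descending to the next of the 2^k levels, so
  w = (2^(k+1) - 2)(1 - (1 - 2^-k)^(2^k)) = \<Theta>(2^k); and lg n = \<Theta>(2^k lg k) gives
  lg n / lg lg lg n = \<Theta>(2^k) as well.
\<close>

section \<open>Descendants in binary search trees\<close>

abbreviation desc :: "nat tree \<Rightarrow> nat \<Rightarrow> nat set" where
  "desc T v \<equiv> set_tree (subt T v)"

lemma subt_notin: "v \<notin> set_tree T \<Longrightarrow> subt T v = Leaf"
  by (induction T) auto

lemma subt_in: "bst T \<Longrightarrow> v \<in> set_tree T \<Longrightarrow> \<exists>l r. subt T v = Node l v r"
  by (induction T) auto

lemma desc_subset: "desc T v \<subseteq> set_tree T"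
  by (induction T) auto

lemma bst_subt: "bst T \<Longrightarrow> bst (subt T v)"
  by (induction T) auto

lemma desc_refl: "bst T \<Longrightarrow> v \<in> set_tree T \<Longrightarrow> v \<in> desc T v"
  using subt_in by fastforce

lemma subt_subt: "bst T \<Longrightarrow> w \<in> desc T v \<Longrightarrow> subt (subt T v) w = subt T w"
proof (induction T)
  case (Node l a r)
  have "w < a" if "w \<in> desc l v" using that desc_subset Node.prems(1) by fastforce
  moreover have "a < w" if "w \<in> desc r v" using that desc_subset Node.prems(1) by fastforce
  ultimately show ?case using Node by (auto split: if_splits)
qed simp

lemma desc_antisym: "bst T \<Longrightarrow> a \<in> desc T b \<Longrightarrow> b \<in> desc T a \<Longrightarrow> a = b"
proof (induction T)
  case (Node l x r)
  have "\<And>w v. w \<in> desc l v \<Longrightarrow> w < x" "\<And>w v. w \<in> desc r v \<Longrightarrow> x < w"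
    using desc_subset Node.prems(1) by fastforce+
  with Node show ?case by (auto split: if_splits)
qed simp

lemma desc_nested:
  "bst T \<Longrightarrow> z \<in> desc T y \<Longrightarrow> z \<in> desc T y' \<Longrightarrow> y \<in> desc T y' \<or> y' \<in> desc T y"
proof (induction T)
  case (Node l x r)
  have "\<And>w v. w \<in> desc l v \<Longrightarrow> w < x" "\<And>w v. w \<in> desc r v \<Longrightarrow> x < w"
    using desc_subset Node.prems(1) by fastforce+
  moreover have "y \<in> set_tree (Node l x r)" "y' \<in> set_tree (Node l x r)"
    using Node.prems(2,3) subt_notin by fastforce+
  ultimately show ?case using Node by (auto split: if_splits) (metis less_asym)+
qed simp

lemma path_nodes_eq: "path_nodes T x = {v \<in> set_tree T. x \<in> desc T v}"
  unfolding path_nodes_def anc_def by blast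

section \<open>Intervals and lowest common ancestors\<close>

definition interval_of :: "nat set \<Rightarrow> nat set \<Rightarrow> bool" where
  "interval_of K S \<longleftrightarrow> S \<subseteq> K \<and> (\<forall>a\<in>S. \<forall>c\<in>S. \<forall>b\<in>K. a \<le> b \<and> b \<le> c \<longrightarrow> b \<in> S)"

lemma interval_ofD: "interval_of K S \<Longrightarrow> a \<in> S \<Longrightarrow> c \<in> S \<Longrightarrow> b \<in> K \<Longrightarrow> a \<le> b \<Longrightarrow> b \<le> c \<Longrightarrow> b \<in> S"
  unfolding interval_of_def by blast

lemma interval_of_subset: "interval_of K S \<Longrightarrow> S \<subseteq> K"
  unfolding interval_of_def by blast

lemma interval_of_restrict: "interval_of K S \<Longrightarrow> S \<subseteq> K' \<Longrightarrow> K' \<subseteq> K \<Longrightarrow> interval_of K' S"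
  unfolding interval_of_def by blast

lemma interval_lca:
  "bst T \<Longrightarrow> interval_of (set_tree T) S \<Longrightarrow> S \<noteq> {} \<Longrightarrow> \<exists>z\<in>S. S \<subseteq> desc T z"
proof (induction T)
  case Leaf then show ?case using interval_of_subset[OF Leaf.prems(2)] Leaf.prems(3) by auto
next
  case (Node l a r)
  have l: "\<forall>y\<in>set_tree l. y < a" and r: "\<forall>y\<in>set_tree r. a < y"
    using Node.prems(1) by auto
  show ?case
  proof (cases "a \<in> S")
    case True
    then show ?thesis using interval_of_subset[OF Node.prems(2)] by auto
  next
    case False
    have "S \<subseteq> set_tree l \<or> S \<subseteq> set_tree r"
    proof (rule ccontr)
      assume "\<not> ?thesis"
      then obtain s1 s2 where s: "s1 \<in> S" "s2 \<in> S" "s1 \<in> set_tree l" "s2 \<in> set_tree r"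
        using interval_of_subset[OF Node.prems(2)] False by auto
      then have "s1 \<le> a" "a \<le> s2" using l r by auto
      then show False using interval_ofD[OF Node.prems(2) s(1,2)] False by simp
    qed
    then show ?thesis
    proof
      assume h: "S \<subseteq> set_tree l"
      then obtain z where z: "z \<in> S" "S \<subseteq> desc l z"
        using Node interval_of_restrict[OF Node.prems(2) h] by auto
      then have "z < a" using h l by auto
      then show ?thesis using z by (intro bexI[of _ z]) auto
    next
      assume h: "S \<subseteq> set_tree r"
      then obtain z where z: "z \<in> S" "S \<subseteq> desc r z"
        using Node interval_of_restrict[OF Node.prems(2) h] by auto
      then have "a < z" using h r by auto
      then show ?thesis using z by (intro bexI[of _ z]) auto
    qed
  qed
qed

lemma interval_of_child:
  assumes "bst (Node l a r)" "c = l \<or> c = r" "interval_of (set_tree c) S"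
  shows "interval_of (set_tree (Node l a r)) S"
  unfolding interval_of_def
proof (intro conjI ballI impI)
  show "S \<subseteq> set_tree (Node l a r)" using interval_of_subset[OF assms(3)] assms(2) by auto
next
  fix x z y assume h: "x \<in> S" "z \<in> S" "y \<in> set_tree (Node l a r)" "x \<le> y \<and> y \<le> z"
  have "x \<in> set_tree c" "z \<in> set_tree c" using h(1,2) interval_of_subset[OF assms(3)] by auto
  then have "y \<in> set_tree c" using h(3,4) assms(1,2) by fastforce
  then show "y \<in> S" using interval_ofD[OF assms(3) h(1,2)] h(4) by blast
qed

lemma interval_of_desc: "bst T \<Longrightarrow> interval_of (set_tree T) (desc T v)"
proof (induction T)
  case Leaf then show ?case by (simp add: interval_of_def)
next
  case (Node l a r)
  consider "v = a" | "v < a" | "a < v" by fastforce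
  then show ?case
  proof cases
    case 1 then show ?thesis by (simp add: interval_of_def)
  next
    case 2
    have "interval_of (set_tree (Node l a r)) (desc l v)"
      using Node by (intro interval_of_child[of l a r l]) auto
    with 2 show ?thesis by simp
  next
    case 3
    have "interval_of (set_tree (Node l a r)) (desc r v)"
      using Node by (intro interval_of_child[of l a r r]) auto
    with 3 show ?thesis by simp
  qed
qed

section \<open>Rotations\<close>

lemma rot_inorder: "rot T e T' \<Longrightarrow> inorder T' = inorder T"
  by (induction rule: rot.induct) auto

lemma rot_ends: "rot T (x,y) T' \<Longrightarrow> x \<in> set_tree T \<and> y \<in> set_tree T"
  by (induction T "(x,y)" T' rule: rot.induct) auto

lemma rot_set: "rot T e T' \<Longrightarrow> set_tree T' = set_tree T"
  by (metis rot_inorder set_inorder)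

lemma rot_bst: "rot T e T' \<Longrightarrow> bst T \<Longrightarrow> bst T'"
  by (metis rot_inorder bst_iff_sorted_wrt_less)

lemma rot_desc: "rot T (x,y) T' \<Longrightarrow> bst T \<Longrightarrow> z \<noteq> x \<Longrightarrow> z \<noteq> y \<Longrightarrow> desc T' z = desc T z"
proof (induction T "(x,y)" T' rule: rot.induct)
  case (rotR A B C)
  then show ?case
    by (cases z x rule: linorder_cases; cases z y rule: linorder_cases) simp_all
next
  case (rotL A B C)
  then show ?case
    by (cases z x rule: linorder_cases; cases z y rule: linorder_cases) simp_all
next
  case (inL l l' a r)
  then show ?case using rot_set[OF inL.hyps(1)] by simp
next
  case (inR r r' l a)
  then show ?case using rot_set[OF inR.hyps(1)] by simp
qed

lemma rots_inorder: "rots T es T' \<Longrightarrow> inorder T' = inorder T"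
  by (induction rule: rots.induct) (auto dest: rot_inorder)

lemma rots_set: "rots T es T' \<Longrightarrow> set_tree T' = set_tree T"
  by (metis rots_inorder set_inorder)

lemma rots_bst: "rots T es T' \<Longrightarrow> bst T \<Longrightarrow> bst T'"
  by (metis rots_inorder bst_iff_sorted_wrt_less)

lemma edge_nodes_Nil[simp]: "edge_nodes [] = {}"
  by (simp add: edge_nodes_def)

lemma edge_nodes_Cons[simp]: "edge_nodes (e # es) = {fst e, snd e} \<union> edge_nodes es"
  by (auto simp add: edge_nodes_def)

lemma rots_ends: "rots T es T' \<Longrightarrow> edge_nodes es \<subseteq> set_tree T"
proof (induction rule: rots.induct)
  case (rots_cons T e T1 es T2)
  then show ?case using rot_ends[of T "fst e" "snd e" T1] rot_set[of T e T1] by simp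
qed simp

lemma rots_desc: "rots T es T' \<Longrightarrow> bst T \<Longrightarrow> z \<notin> edge_nodes es \<Longrightarrow> desc T' z = desc T z"
proof (induction rule: rots.induct)
  case (rots_cons T e T1 es T2)
  have "desc T2 z = desc T1 z" using rots_cons rot_bst by simp
  also have "\<dots> = desc T z" using rots_cons rot_desc[of T "fst e" "snd e" T1 z] by simp
  finally show ?case .
qed simp

section \<open>Transition points\<close>

definition is_top :: "nat tree \<Rightarrow> nat set \<Rightarrow> nat \<Rightarrow> bool" where
  "is_top T S z \<longleftrightarrow> z \<in> S \<and> S \<subseteq> desc T z"

definition is_transition :: "nat tree \<Rightarrow> nat set \<Rightarrow> nat set \<Rightarrow> nat \<Rightarrow> bool" where
  "is_transition T L R z \<longleftrightarrow> (is_top T L z \<or> is_top T R z) \<and> \<not> L \<union> R \<subseteq> desc T z"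

lemma is_top_unique: "bst T \<Longrightarrow> is_top T S z1 \<Longrightarrow> is_top T S z2 \<Longrightarrow> z1 = z2"
  unfolding is_top_def using desc_antisym by blast

lemma transition_exists:
  assumes "bst T" "interval_of (set_tree T) L" "interval_of (set_tree T) R"
    and "L \<noteq> {}" "R \<noteq> {}" "L \<inter> R = {}"
  shows "\<exists>z. is_transition T L R z"
proof -
  obtain l where l: "is_top T L l" using interval_lca assms unfolding is_top_def by blast
  obtain r where r: "is_top T R r" using interval_lca assms unfolding is_top_def by blast
  have "l \<noteq> r" using l r assms(6) unfolding is_top_def by blast
  then have "\<not> (L \<union> R \<subseteq> desc T l \<and> L \<union> R \<subseteq> desc T r)"
    using l r desc_antisym[OF assms(1)] unfolding is_top_def by blast
  then show ?thesis using l r unfolding is_transition_def by blast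
qed

lemma transition_unique:
  assumes "bst T" "interval_of (set_tree T) (L \<union> R)"
    and "is_transition T L R z1" "is_transition T L R z2"
  shows "z1 = z2"
proof -
  have "L \<union> R \<noteq> {}" using assms(3) unfolding is_transition_def is_top_def by blast
  then obtain u where u: "is_top T (L \<union> R) u" using interval_lca[OF assms(1,2)] unfolding is_top_def by blast
  txt \<open>The interval containing the common ancestor u has u as top, so transitions are tops of the other one.\<close>
  have "\<not> is_top T S z" if "S = L \<or> S = R" "u \<in> S" "is_transition T L R z" for S z
    using that u is_top_unique[OF assms(1), of S u z] unfolding is_transition_def is_top_def by blast
  then have "is_top T L z1 \<and> is_top T L z2 \<or> is_top T R z1 \<and> is_top T R z2"
    using u assms(3,4) unfolding is_transition_def is_top_def by blast
  then show ?thesis using is_top_unique[OF assms(1)] by blast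
qed

lemma transition_rots:
  "rots T es T' \<Longrightarrow> bst T \<Longrightarrow> z \<notin> edge_nodes es \<Longrightarrow> is_transition T L R z \<Longrightarrow> is_transition T' L R z"
  unfolding is_transition_def is_top_def using rots_desc by simp

definition left_part :: "nat tree \<Rightarrow> nat \<Rightarrow> nat set" where
  "left_part P y = (case subt P y of Leaf \<Rightarrow> {} | Node l _ _ \<Rightarrow> insert y (set_tree l))"

definition right_part :: "nat tree \<Rightarrow> nat \<Rightarrow> nat set" where
  "right_part P y = (case subt P y of Leaf \<Rightarrow> {} | Node _ _ r \<Rightarrow> set_tree r)"

lemma left_right_part:
  assumes "bst P" "y \<in> set_tree P"
  shows "left_part P y \<union> right_part P y = desc P y" "left_part P y \<inter> right_part P y = {}"
    "\<And>x. x \<in> desc P y \<Longrightarrow> x \<in> left_part P y \<longleftrightarrow> x \<le> y"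
    "interval_of (set_tree P) (left_part P y)" "interval_of (set_tree P) (right_part P y)"
proof -
  obtain l r where s: "subt P y = Node l y r" using subt_in assms by blast
  have b: "bst (Node l y r)" using bst_subt[OF assms(1), of y] s by simp
  have L: "left_part P y = insert y (set_tree l)" and R: "right_part P y = set_tree r"
    using s by (simp_all add: left_part_def right_part_def)
  show "left_part P y \<union> right_part P y = desc P y" using s L R by auto
  show "left_part P y \<inter> right_part P y = {}" using L R b by fastforce
  show side: "\<And>x. x \<in> desc P y \<Longrightarrow> x \<in> left_part P y \<longleftrightarrow> x \<le> y" using s L b by fastforce
  have I: "interval_of (set_tree P) (desc P y)" using interval_of_desc assms(1) by blast
  show "interval_of (set_tree P) (left_part P y)" unfolding interval_of_def
  proof (intro conjI ballI impI)
    show "left_part P y \<subseteq> set_tree P" using L s desc_subset[of P y] by auto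
  next
    fix a c b assume h: "a \<in> left_part P y" "c \<in> left_part P y" "b \<in> set_tree P" "a \<le> b \<and> b \<le> c"
    have "b \<in> desc P y" using interval_ofD[OF I, of a c b] h L s by auto
    moreover have "b \<le> y" using h(2,4) L b by fastforce
    ultimately show "b \<in> left_part P y" using side by blast
  qed
  show "interval_of (set_tree P) (right_part P y)" unfolding interval_of_def
  proof (intro conjI ballI impI)
    show "right_part P y \<subseteq> set_tree P" using R s desc_subset[of P y] by auto
  next
    fix a c b assume h: "a \<in> right_part P y" "c \<in> right_part P y" "b \<in> set_tree P" "a \<le> b \<and> b \<le> c"
    have "b \<in> desc P y" using interval_ofD[OF I, of a c b] h R s by auto
    moreover have "y < b" using h(1,4) R b by fastforce
    ultimately show "b \<in> right_part P y" using side \<open>left_part P y \<union> right_part P y = desc P y\<close> by fastforce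
  qed
qed

definition transition_point :: "nat tree \<Rightarrow> nat tree \<Rightarrow> nat \<Rightarrow> nat" where
  "transition_point T P y = (THE z. is_transition T (left_part P y) (right_part P y) z)"

lemma transition_point_eq:
  assumes "bst T" "set_tree T = set_tree P" "bst P" "y \<in> set_tree P"
    and "is_transition T (left_part P y) (right_part P y) z"
  shows "transition_point T P y = z"
  unfolding transition_point_def
proof (rule the_equality)
  show "z' = z" if "is_transition T (left_part P y) (right_part P y) z'" for z'
    using transition_unique[OF assms(1) _ that assms(5)] interval_of_desc[OF assms(3)] left_right_part(1)[OF assms(3,4)]
      assms(2) by metis
qed (fact assms(5))

lemma is_transition_transition_point:
  assumes "bst T" "set_tree T = set_tree P" "bst P" "y \<in> set_tree P" "right_part P y \<noteq> {}"
  shows "is_transition T (left_part P y) (right_part P y) (transition_point T P y)"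
proof -
  have "y \<in> left_part P y" using left_right_part(3)[OF assms(3,4)] desc_refl[OF assms(3,4)] by blast
  then obtain z where "is_transition T (left_part P y) (right_part P y) z"
    using transition_exists[OF assms(1)] left_right_part[OF assms(3,4)] assms(2,5) by (metis empty_iff)
  then show ?thesis using transition_point_eq[OF assms(1-4)] by simp
qed

lemma transition_distinct_nested:
  assumes "bst P" "y \<in> set_tree P" "y' \<in> desc P y" "y \<noteq> y'"
    and "is_transition T (left_part P y) (right_part P y) z"
    and "is_transition T (left_part P y') (right_part P y') z"
  shows False
proof -
  have y'P: "y' \<in> set_tree P" using assms(3) desc_subset by blast
  note y = left_right_part[OF assms(1,2)] and y' = left_right_part[OF assms(1) y'P]
  have "desc P y' \<subseteq> desc P y" using subt_subt[OF assms(1,3)] desc_subset by metis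
  moreover have "desc P y' \<subseteq> left_part P y \<or> desc P y' \<subseteq> right_part P y"
  proof -
    obtain l r where s: "subt P y = Node l y r" using subt_in assms(1,2) by blast
    have "bst (Node l y r)" using bst_subt[OF assms(1), of y] s by simp
    moreover have "desc P y' = desc (Node l y r) y'" using subt_subt[OF assms(1,3)] s by simp
    ultimately show ?thesis using s assms(4) desc_subset
      unfolding left_part_def right_part_def by (fastforce split: if_splits)
  qed
  moreover have "z \<in> desc P y'" "\<not> desc P y' \<subseteq> desc T z"
    using assms(6) y'(1) unfolding is_transition_def is_top_def by blast+
  ultimately show False
    using assms(5) y(2) unfolding is_transition_def is_top_def by blast
qed

lemma transition_point_inj:
  assumes "bst T" "set_tree T = set_tree P" "bst P" "y \<in> set_tree P" "y' \<in> set_tree P"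
    and "right_part P y \<noteq> {}" "right_part P y' \<noteq> {}"
    and "transition_point T P y = transition_point T P y'"
  shows "y = y'"
proof (rule ccontr)
  assume ne: "y \<noteq> y'"
  define z where "z = transition_point T P y"
  have t: "is_transition T (left_part P y) (right_part P y) z"
    "is_transition T (left_part P y') (right_part P y') z"
    using is_transition_transition_point[OF assms(1-3)] assms(4-8) unfolding z_def by metis+
  then have "z \<in> desc P y" "z \<in> desc P y'"
    using left_right_part(1)[OF assms(3,4)] left_right_part(1)[OF assms(3,5)] unfolding is_transition_def is_top_def by blast+
  then have "y \<in> desc P y' \<or> y' \<in> desc P y" using desc_nested[OF assms(3)] by blast
  then show False using transition_distinct_nested[OF assms(3)] assms(4,5) t ne by metis
qed

section \<open>The interleave lower bound\<close>

abbreviation alternating :: "('a \<Rightarrow> bool) \<Rightarrow> 'a list \<Rightarrow> bool" where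
  "alternating p \<equiv> successively (\<lambda>a b. p a \<noteq> p b)"

text \<open>For an alternating list this is the number of elements x with p x = s.\<close>
definition side_count :: "bool \<Rightarrow> ('a \<Rightarrow> bool) \<Rightarrow> 'a list \<Rightarrow> nat" where
  "side_count s p xs = (case xs of [] \<Rightarrow> 0 | x # _ \<Rightarrow> (length xs + (if p x = s then 1 else 0)) div 2)"

lemma side_count_ge: "length xs div 2 \<le> side_count s p xs"
  by (cases xs) (auto simp: side_count_def)

lemma side_count_le: "side_count s p xs \<le> 1 + side_count s' p xs"
proof -
  have "side_count s p xs \<le> (length xs + 1) div 2" by (cases xs) (auto simp: side_count_def)
  also have "\<dots> \<le> 1 + length xs div 2" by simp
  finally show ?thesis using side_count_ge[of xs s' p] by linarith
qed

lemma side_count_Cons_le: "side_count s p (x # xs) \<le> 1 + side_count s' p xs"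
proof -
  have "side_count s p (x # xs) \<le> (length xs + 2) div 2" by (auto simp: side_count_def)
  also have "\<dots> \<le> 1 + length xs div 2" by simp
  finally show ?thesis using side_count_ge[of xs s' p] by linarith
qed

lemma side_count_Cons_other:
  "alternating p (x # xs) \<Longrightarrow> p x \<noteq> s \<Longrightarrow> side_count s p (x # xs) \<le> side_count s p xs"
  by (cases xs) (auto simp: side_count_def)

text \<open>
  The number of future queries below y that lie on the side of y's transition point, if these
  queries alternate between the two sides of y.
\<close>
definition interleave_bound :: "nat tree \<Rightarrow> nat tree \<Rightarrow> nat \<Rightarrow> nat list \<Rightarrow> nat" where
  "interleave_bound T P y X =
     side_count (transition_point T P y \<le> y) (\<lambda>x. x \<le> y) (filter (\<lambda>x. x \<in> desc P y) X)"

lemma interleave_bound_Cons_le: "interleave_bound T P y (x # xs) \<le> 1 + interleave_bound T' P y xs"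
  unfolding interleave_bound_def
  by (auto intro: side_count_le[simplified] side_count_Cons_le[simplified])

lemma interleave_bound_Cons_untouched:
  assumes "bst T" "set_tree T = set_tree P" "bst P" "y \<in> set_tree P" "right_part P y \<noteq> {}"
    and "rots T es T'" "alternating (\<lambda>x. x \<le> y) (filter (\<lambda>x. x \<in> desc P y) (x # xs))"
    and "transition_point T P y \<notin> path_nodes T x \<union> edge_nodes es"
  shows "interleave_bound T P y (x # xs) \<le> interleave_bound T' P y xs"
proof -
  define z where "z = transition_point T P y"
  have zt: "is_transition T (left_part P y) (right_part P y) z"
    unfolding z_def using is_transition_transition_point[OF assms(1-5)] .
  have "is_transition T' (left_part P y) (right_part P y) z"
    using transition_rots[OF assms(6,1) _ zt] assms(8) unfolding z_def by blast
  moreover have "bst T'" "set_tree T' = set_tree P"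
    using rots_bst[OF assms(6,1)] rots_set[OF assms(6)] assms(2) by simp_all
  ultimately have z': "transition_point T' P y = z"
    using transition_point_eq assms(3,4) by blast
  note LR = left_right_part[OF assms(3,4)]
  show ?thesis
  proof (cases "x \<in> desc P y")
    case xI: True
    have "(x \<le> y) \<noteq> (z \<le> y)"
    proof
      assume same_side: "(x \<le> y) = (z \<le> y)"
      have "z \<in> desc P y" using zt LR(1) unfolding is_transition_def is_top_def by blast
      then have "is_top T (left_part P y) z \<and> x \<in> left_part P y \<or>
                 is_top T (right_part P y) z \<and> x \<in> right_part P y"
        using zt LR xI same_side unfolding is_transition_def is_top_def by blast
      then have "x \<in> desc T z" unfolding is_top_def by blast
      moreover have "z \<in> set_tree T"
        using zt LR(1) assms(2) desc_subset[of P y] unfolding is_transition_def is_top_def by blast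
      ultimately have "z \<in> path_nodes T x" unfolding path_nodes_eq by blast
      then show False using assms(8) unfolding z_def by blast
    qed
    then show ?thesis
      using side_count_Cons_other assms(7) xI z' unfolding interleave_bound_def z_def[symmetric] by simp
  next
    case False
    then show ?thesis using z' unfolding interleave_bound_def z_def[symmetric] by simp
  qed
qed

lemma path_nodes_subset: "path_nodes T x \<subseteq> set_tree T"
  unfolding path_nodes_def anc_def by blast

lemma edge_nodes_subset_min_subtree:
  assumes "bst T" "edge_nodes es \<subseteq> set_tree T"
  shows "edge_nodes es \<subseteq> min_subtree T (edge_nodes es)"
  using assms desc_refl unfolding min_subtree_def anc_def by blast

lemma min_subtree_subset: "min_subtree T S \<subseteq> set_tree T"
  unfolding min_subtree_def anc_def by blast

text \<open>
  The touched nodes pay for all y whose transition point they are; these are distinct, and for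
  every other y the query is free.
\<close>
lemma interleave_bound_step:
  assumes "bst T" "set_tree T = set_tree P" "bst P" "Y \<subseteq> set_tree P" "finite Y"
    and "\<forall>y\<in>Y. right_part P y \<noteq> {}" "rots T es T'"
    and "\<forall>y\<in>Y. alternating (\<lambda>x. x \<le> y) (filter (\<lambda>x. x \<in> desc P y) (x # xs))"
  shows "(\<Sum>y\<in>Y. interleave_bound T P y (x # xs)) \<le> step_cost T x es + (\<Sum>y\<in>Y. interleave_bound T' P y xs)"
proof -
  define touched where "touched = path_nodes T x \<union> edge_nodes es"
  define Yt where "Yt = {y\<in>Y. transition_point T P y \<in> touched}"
  have "Yt \<subseteq> Y" unfolding Yt_def by blast
  have sub: "touched \<subseteq> path_nodes T x \<union> min_subtree T (edge_nodes es)"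
    unfolding touched_def using edge_nodes_subset_min_subtree[OF assms(1) rots_ends[OF assms(7)]] by blast
  have fin: "finite (path_nodes T x \<union> min_subtree T (edge_nodes es))"
    by (simp add: finite_subset[OF path_nodes_subset] finite_subset[OF min_subtree_subset])
  have touched_le: "card touched \<le> step_cost T x es"
    unfolding step_cost_def using card_mono[OF fin sub] .
  have "inj_on (transition_point T P) Yt"
    using transition_point_inj[OF assms(1-3)] assms(4,6) unfolding Yt_def inj_on_def
    by (metis (no_types, lifting) mem_Collect_eq subsetD)
  moreover have "transition_point T P ` Yt \<subseteq> touched" unfolding Yt_def by blast
  moreover have "finite touched" using finite_subset[OF sub fin] .
  ultimately have "card Yt \<le> card touched" by (rule card_inj_on_le)
  have "interleave_bound T P y (x # xs) \<le> (if y \<in> Yt then 1 else 0) + interleave_bound T' P y xs"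
    if "y \<in> Y" for y
  proof (cases "y \<in> Yt")
    case True
    then show ?thesis using interleave_bound_Cons_le by simp
  next
    case False
    then have "transition_point T P y \<notin> path_nodes T x \<union> edge_nodes es"
      using that unfolding Yt_def touched_def by blast
    with that False assms(4,6,8) show ?thesis
      using interleave_bound_Cons_untouched[OF assms(1-3) _ _ assms(7), of y x xs] by auto
  qed
  then have "(\<Sum>y\<in>Y. interleave_bound T P y (x # xs)) \<le>
      (\<Sum>y\<in>Y. (if y \<in> Yt then 1 else 0) + interleave_bound T' P y xs)"
    by (rule sum_mono)
  also have "\<dots> = card Yt + (\<Sum>y\<in>Y. interleave_bound T' P y xs)"
    using assms(5) \<open>Yt \<subseteq> Y\<close> by (simp add: sum.distrib sum.If_cases Int_absorb1)
  also have "\<dots> \<le> step_cost T x es + (\<Sum>y\<in>Y. interleave_bound T' P y xs)"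
    using \<open>card Yt \<le> card touched\<close> touched_le by (simp only: add_le_cancel_right)
  finally show ?thesis .
qed

lemma interleave_bound_exec:
  "exec T X c \<Longrightarrow> bst T \<Longrightarrow> set_tree T = set_tree P \<Longrightarrow> bst P \<Longrightarrow> Y \<subseteq> set_tree P \<Longrightarrow> finite Y \<Longrightarrow>
    \<forall>y\<in>Y. right_part P y \<noteq> {} \<Longrightarrow>
    \<forall>y\<in>Y. alternating (\<lambda>x. x \<le> y) (filter (\<lambda>x. x \<in> desc P y) X) \<Longrightarrow>
    (\<Sum>y\<in>Y. interleave_bound T P y X) \<le> c"
proof (induction rule: exec.induct)
  case (exec_nil T) then show ?case by (simp add: interleave_bound_def side_count_def)
next
  case (exec_cons T es T' xs c x)
  have "bst T'" "set_tree T' = set_tree P"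
    using rots_bst[OF exec_cons.hyps(1)] rots_set[OF exec_cons.hyps(1)] exec_cons.prems(1,2) by simp_all
  moreover have "alternating (\<lambda>x. x \<le> y) (filter (\<lambda>x. x \<in> desc P y) xs)" if "y \<in> Y" for y
    using bspec[OF exec_cons.prems(7) that] by (auto simp: successively_Cons split: if_splits)
  ultimately have "(\<Sum>y\<in>Y. interleave_bound T' P y xs) \<le> c"
    using exec_cons.IH exec_cons.prems(3-6) by blast
  moreover have "(\<Sum>y\<in>Y. interleave_bound T P y (x # xs)) \<le> step_cost T x es + (\<Sum>y\<in>Y. interleave_bound T' P y xs)"
    using interleave_bound_step[OF exec_cons.prems(1-6) exec_cons.hyps(1) exec_cons.prems(7)] .
  ultimately show ?case by simp
qed

section \<open>Static search cost of evenly split query sequences\<close>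

lemma exec_static: "exec T X (\<Sum>x\<leftarrow>X. card (path_nodes T x))"
proof (induction X)
  case Nil then show ?case using exec_nil by simp
next
  case (Cons x X)
  have "min_subtree T {} = {}" by (simp add: min_subtree_def)
  then show ?case using exec_cons[OF rots_nil Cons] by (simp add: step_cost_def)
qed

lemma opt_cost_le_static: "opt_cost T X \<le> (\<Sum>x\<leftarrow>X. card (path_nodes T x))"
  unfolding opt_cost_def by (rule Least_le) (rule exec_static)

lemma exec_opt_cost: "exec T X (opt_cost T X)"
  unfolding opt_cost_def by (rule LeastI) (rule exec_static)

definition count_in :: "nat list \<Rightarrow> nat set \<Rightarrow> nat" where
  "count_in X S = length (filter (\<lambda>x. x \<in> S) X)"

lemma sum_list_card_eq_sum_count_in:
  "finite K \<Longrightarrow> (\<Sum>x\<leftarrow>X. card {v\<in>K. x \<in> F v}) = (\<Sum>v\<in>K. count_in X (F v))"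
proof (induction X)
  case Nil then show ?case by (simp add: count_in_def)
next
  case (Cons x X)
  have "card {v\<in>K. x \<in> F v} = (\<Sum>v\<in>K. if x \<in> F v then 1 else 0)"
    using Cons.prems by (simp add: sum.If_cases Int_def conj_commute)
  moreover have "(\<Sum>v\<in>K. length (filter (\<lambda>x. x \<in> F v) (x # X))) =
     (\<Sum>v\<in>K. (if x \<in> F v then 1 else 0) + length (filter (\<lambda>x. x \<in> F v) X))"
    by (intro sum.cong) auto
  ultimately show ?case using Cons by (simp add: count_in_def sum.distrib)
qed

fun full :: "'a tree \<Rightarrow> bool" where
  "full Leaf = True"
| "full (Node l a r) = ((l = Leaf) = (r = Leaf) \<and> full l \<and> full r)"

text \<open>The expected number of inner nodes on a root-to-leaf path that takes each child with probability 1/2.\<close>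
fun inner_depth :: "'a tree \<Rightarrow> real" where
  "inner_depth Leaf = 0"
| "inner_depth (Node l a r) = (if l = Leaf \<and> r = Leaf then 0 else 1 + (inner_depth l + inner_depth r) / 2)"

definition halving :: "nat list \<Rightarrow> nat tree \<Rightarrow> bool" where
  "halving X Q \<longleftrightarrow> (\<forall>v\<in>set_tree Q. case subt Q v of Leaf \<Rightarrow> True | Node l _ r \<Rightarrow>
      (l \<noteq> Leaf \<longrightarrow> 2 * count_in X (set_tree l) = count_in X (desc Q v) \<and>
                      2 * count_in X (set_tree r) = count_in X (desc Q v)))"

lemma full_subt: "full T \<Longrightarrow> full (subt T v)"
  by (induction T) auto

lemma subt_Node_left: "bst (Node l a r) \<Longrightarrow> v \<in> set_tree l \<Longrightarrow> subt (Node l a r) v = subt l v"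
  by auto

lemma subt_Node_right: "bst (Node l a r) \<Longrightarrow> v \<in> set_tree r \<Longrightarrow> subt (Node l a r) v = subt r v"
  by fastforce

lemma halving_Node:
  assumes "bst (Node l a r)" "halving X (Node l a r)"
  shows "halving X l" "halving X r"
proof -
  have "halving X t" if t: "t = l \<or> t = r" and sub: "\<And>v. v \<in> set_tree t \<Longrightarrow> subt (Node l a r) v = subt t v"
    for t
    unfolding halving_def
  proof
    fix v assume v: "v \<in> set_tree t"
    then have "v \<in> set_tree (Node l a r)" using t by auto
    then have "case subt (Node l a r) v of Leaf \<Rightarrow> True | Node l' _ r' \<Rightarrow>
        (l' \<noteq> Leaf \<longrightarrow> 2 * count_in X (set_tree l') = count_in X (desc (Node l a r) v) \<and>
                         2 * count_in X (set_tree r') = count_in X (desc (Node l a r) v))"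
      using assms(2) unfolding halving_def by blast
    then show "case subt t v of Leaf \<Rightarrow> True | Node l' _ r' \<Rightarrow>
        (l' \<noteq> Leaf \<longrightarrow> 2 * count_in X (set_tree l') = count_in X (desc t v) \<and>
                         2 * count_in X (set_tree r') = count_in X (desc t v))"
      unfolding sub[OF v] .
  qed
  then show "halving X l" "halving X r"
    using subt_Node_left[OF assms(1)] subt_Node_right[OF assms(1)] by blast+
qed

lemma inner_keys_Node:
  assumes "bst (Node l a r)" "l \<noteq> Leaf"
  shows "inner_keys (Node l a r) = insert a (inner_keys l \<union> inner_keys r)"
  using assms subt_Node_left[OF assms(1)] subt_Node_right[OF assms(1)]
  unfolding inner_keys_def by (auto 0 3)

lemma sum_subt_Node:
  assumes "bst (Node l a r)" "A \<subseteq> set_tree l" "B \<subseteq> set_tree r"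
  shows "(\<Sum>v\<in>insert a (A \<union> B). f (subt (Node l a r) v)) =
    f (Node l a r) + (\<Sum>v\<in>A. f (subt l v)) + (\<Sum>v\<in>B. f (subt r v))"
proof -
  have fin: "finite A" "finite B" using assms(2,3) by (meson finite_set_tree finite_subset)+
  have "a \<notin> A \<union> B" "A \<inter> B = {}" using assms by fastforce+
  then have "(\<Sum>v\<in>insert a (A \<union> B). f (subt (Node l a r) v)) =
    f (Node l a r) + (\<Sum>v\<in>A. f (subt (Node l a r) v)) + (\<Sum>v\<in>B. f (subt (Node l a r) v))"
    using fin by (simp add: sum.union_disjoint add.assoc)
  also have "(\<Sum>v\<in>A. f (subt (Node l a r) v)) = (\<Sum>v\<in>A. f (subt l v))"
    using assms(2) by (intro sum.cong refl arg_cong[where f = f] subt_Node_left[OF assms(1)]) blast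
  also have "(\<Sum>v\<in>B. f (subt (Node l a r) v)) = (\<Sum>v\<in>B. f (subt r v))"
    using assms(3) by (intro sum.cong refl arg_cong[where f = f] subt_Node_right[OF assms(1)]) blast
  finally show ?thesis .
qed

text \<open>Each inner node collects all queries of its subtree, and these halve at every level.\<close>
lemma sum_count_in_halving:
  "bst Q \<Longrightarrow> full Q \<Longrightarrow> halving X Q \<Longrightarrow>
    (\<Sum>v\<in>set_tree Q. real (count_in X (desc Q v))) = real (count_in X (set_tree Q)) * (inner_depth Q + 1) \<and>
    (\<Sum>v\<in>inner_keys Q. real (count_in X (desc Q v))) = real (count_in X (set_tree Q)) * inner_depth Q"
proof (induction Q)
  case Leaf then show ?case by (simp add: inner_keys_def count_in_def)
next
  case (Node l a r)
  show ?case
  proof (cases "l = Leaf")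
    case True
    then have "r = Leaf" using Node.prems(2) by simp
    then have "inner_keys (Node l a r) = {}" using True by (auto simp: inner_keys_def)
    then show ?thesis using True \<open>r = Leaf\<close> by simp
  next
    case False
    let ?c = "\<lambda>S. real (count_in X S)" and ?Q = "Node l a r"
    have IH: "(\<Sum>v\<in>set_tree t. ?c (desc t v)) = ?c (set_tree t) * (inner_depth t + 1)"
      "(\<Sum>v\<in>inner_keys t. ?c (desc t v)) = ?c (set_tree t) * inner_depth t" if "t = l \<or> t = r" for t
      using that Node halving_Node[of l a r X] by auto
    have half: "?c (set_tree l) = ?c (set_tree ?Q) / 2" "?c (set_tree r) = ?c (set_tree ?Q) / 2"
      using Node.prems(3) False unfolding halving_def by (auto simp flip: of_nat_mult)
    have "set_tree ?Q = insert a (set_tree l \<union> set_tree r)" by simp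
    then have "(\<Sum>v\<in>set_tree ?Q. ?c (desc ?Q v)) = ?c (set_tree ?Q) * (inner_depth ?Q + 1)"
      using sum_subt_Node[OF Node.prems(1) subset_refl subset_refl, of "\<lambda>t. ?c (set_tree t)"]
        IH half False by (simp add: field_simps)
    moreover have "(\<Sum>v\<in>inner_keys ?Q. ?c (desc ?Q v)) = ?c (set_tree ?Q) * inner_depth ?Q"
      using sum_subt_Node[OF Node.prems(1), of "inner_keys l" "inner_keys r" "\<lambda>t. ?c (set_tree t)"]
        inner_keys_Node[OF Node.prems(1) False] IH half False by (simp add: inner_keys_def field_simps)
    ultimately show ?thesis by blast
  qed
qed

section \<open>Strongly-stable sequences\<close>

lemma alternating_last:
  "alternating s xs \<Longrightarrow> xs \<noteq> [] \<Longrightarrow> s (last xs) = (if even (length xs) then \<not> s (hd xs) else s (hd xs))"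
  by (induction xs rule: induct_list012) auto

lemma alternating_append_self_even: "alternating s (xs @ xs) \<Longrightarrow> even (length xs)"
  using alternating_last[of s xs] by (cases "xs = []") (auto simp: successively_append_iff split: if_splits)

lemma alternating_even_length_filter:
  "alternating s xs \<Longrightarrow> even (length xs) \<Longrightarrow> 2 * length (filter s xs) = length xs"
proof (induction xs rule: induct_list012)
  case (3 x y zs)
  then have "2 * length (filter s zs) = length zs" by (cases zs) auto
  with 3 show ?case by auto
qed simp_all

lemma inner_node:
  assumes "bst P" "full P" "v \<in> inner_keys P"
  obtains l r where "subt P v = Node l v r" "l \<noteq> Leaf" "r \<noteq> Leaf" "bst (Node l v r)"
proof -
  have "v \<in> set_tree P" using assms(3) unfolding inner_keys_def by blast
  then obtain l r where s: "subt P v = Node l v r" using subt_in[OF assms(1)] by blast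
  have "Node l v r \<noteq> Node Leaf v Leaf" using assms(3) s unfolding inner_keys_def by simp
  moreover have "full (Node l v r)" using full_subt[OF assms(2), of v] s by simp
  ultimately have "l \<noteq> Leaf" "r \<noteq> Leaf" by auto
  moreover have "bst (Node l v r)" using bst_subt[OF assms(1), of v] s by simp
  ultimately show ?thesis using that s by blast
qed

lemma strongly_stable_alternating:
  assumes "bst P" "strongly_stable P X" "v \<in> inner_keys P"
  shows "alternating (\<lambda>x. x \<le> v) (filter (\<lambda>x. x \<in> desc P v) X)"
proof -
  have vP: "v \<in> set_tree P" using assms(3) unfolding inner_keys_def by blast
  obtain l r where s: "subt P v = Node l v r" using subt_in[OF assms(1) vP] by blast
  have "bst (Node l v r)" using bst_subt[OF assms(1), of v] s by simp
  then have "(a \<le> v) \<noteq> (b \<le> v)" if "a \<in> set_tree l \<and> b \<in> set_tree r \<or> a \<in> set_tree r \<and> b \<in> set_tree l"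
    for a b using that by fastforce
  moreover have "strongly_stable_node P X v" using assms(2,3) unfolding strongly_stable_def by blast
  ultimately show ?thesis
    unfolding strongly_stable_node_def successively_conv_nth s by (simp add: Let_def)
qed

lemma rep_stable_strongly_stable:
  assumes "rep_stable P X" shows "strongly_stable P X" "strongly_stable P (X @ X)"
proof -
  have "strongly_stable P (concat (replicate 1 X))" "strongly_stable P (concat (replicate 2 X))"
    using assms unfolding rep_stable_def by auto
  then show "strongly_stable P X" "strongly_stable P (X @ X)" by (simp_all add: numeral_2_eq_2)
qed

lemma rep_stable_even:
  assumes "bst P" "rep_stable P X" "v \<in> inner_keys P"
  shows "even (length (filter (\<lambda>x. x \<in> desc P v) X))"
  using strongly_stable_alternating[OF assms(1) rep_stable_strongly_stable(2)[OF assms(2)] assms(3)]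
  by (simp add: alternating_append_self_even)

text \<open>Queries are to leaves, so a query below an inner node v lies strictly left or right of v.\<close>
lemma rep_stable_halving:
  assumes "bst P" "full P" "rep_stable P X"
  shows "halving X P"
  unfolding halving_def
proof
  fix v assume vP: "v \<in> set_tree P"
  show "case subt P v of Leaf \<Rightarrow> True | Node l _ r \<Rightarrow>
      (l \<noteq> Leaf \<longrightarrow> 2 * count_in X (set_tree l) = count_in X (desc P v) \<and>
                      2 * count_in X (set_tree r) = count_in X (desc P v))"
  proof (cases "v \<in> inner_keys P")
    case False
    then have "subt P v = Node Leaf v Leaf" using vP unfolding inner_keys_def by blast
    then show ?thesis by simp
  next
    case True
    obtain l r where s: "subt P v = Node l v r" and b: "bst (Node l v r)"
      using inner_node[OF assms(1,2) True] by blast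
    define Xv where "Xv = filter (\<lambda>x. x \<in> desc P v) X"
    have ss: "strongly_stable P X" using rep_stable_strongly_stable(1)[OF assms(3)] .
    have "x \<noteq> v" if "x \<in> set X" for x
      using that True ss unfolding strongly_stable_def leaf_keys_def inner_keys_def by auto
    then have l: "count_in X (set_tree l) = length (filter (\<lambda>x. x \<le> v) Xv)"
      and r: "count_in X (set_tree r) = length (filter (\<lambda>x. \<not> x \<le> v) Xv)"
      unfolding count_in_def Xv_def filter_filter s using b by (auto intro!: arg_cong[where f = length] filter_cong)
    have "2 * length (filter (\<lambda>x. x \<le> v) Xv) = length Xv"
      unfolding Xv_def using strongly_stable_alternating[OF assms(1) ss True] rep_stable_even[OF assms(1,3) True]
      by (rule alternating_even_length_filter)
    moreover have "length (filter (\<lambda>x. x \<le> v) Xv) + length (filter (\<lambda>x. \<not> x \<le> v) Xv) = length Xv"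
      by (rule sum_length_filter_compl)
    ultimately show ?thesis using l r s unfolding count_in_def Xv_def by simp
  qed
qed

section \<open>Optimal cost of repeatable strongly-stable sequences\<close>

lemma count_in_rep_stable: "rep_stable P X \<Longrightarrow> count_in X (set_tree P) = length X"
  using rep_stable_strongly_stable(1) unfolding strongly_stable_def leaf_keys_def count_in_def
  by (metis (no_types, lifting) filter_True mem_Collect_eq subsetD)

lemma opt_cost_rep_stable_upper:
  assumes "bst P" "full P" "rep_stable P X"
  shows "real (opt_cost P X) \<le> real (length X) * (inner_depth P + 1)"
proof -
  have "opt_cost P X \<le> (\<Sum>x\<leftarrow>X. card (path_nodes P x))" by (rule opt_cost_le_static)
  also have "\<dots> = (\<Sum>v\<in>set_tree P. count_in X (desc P v))"
    unfolding path_nodes_eq by (simp add: sum_list_card_eq_sum_count_in)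
  finally have "real (opt_cost P X) \<le> (\<Sum>v\<in>set_tree P. real (count_in X (desc P v)))"
    by (simp flip: of_nat_sum)
  then show ?thesis
    using sum_count_in_halving[OF assms(1,2) rep_stable_halving[OF assms]] count_in_rep_stable[OF assms(3)]
    by simp
qed

lemma opt_cost_rep_stable_lower:
  assumes "bst P" "full P" "rep_stable P X"
  shows "real (length X) * inner_depth P / 2 \<le> real (opt_cost P X)"
proof -
  have inner: "inner_keys P \<subseteq> set_tree P" unfolding inner_keys_def by blast
  have right_ne: "right_part P y \<noteq> {}" if y: "y \<in> inner_keys P" for y
  proof -
    obtain l r where "subt P y = Node l y r" "r \<noteq> Leaf" using inner_node[OF assms(1,2) y] by metis
    then show ?thesis unfolding right_part_def by (cases r) auto
  qed
  have "real (count_in X (desc P y)) / 2 \<le> real (interleave_bound P P y X)" if "y \<in> inner_keys P" for y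
  proof -
    have "even (count_in X (desc P y))"
      using rep_stable_even[OF assms(1,3) that] unfolding count_in_def .
    moreover have "count_in X (desc P y) div 2 \<le> interleave_bound P P y X"
      unfolding interleave_bound_def count_in_def by (rule side_count_ge)
    ultimately show ?thesis by (auto simp: real_of_nat_div elim: evenE)
  qed
  then have "(\<Sum>y\<in>inner_keys P. real (count_in X (desc P y))) / 2 \<le> (\<Sum>y\<in>inner_keys P. real (interleave_bound P P y X))"
    unfolding sum_divide_distrib by (rule sum_mono)
  also have "\<dots> \<le> real (opt_cost P X)"
    using interleave_bound_exec[OF exec_opt_cost assms(1) refl assms(1) inner] right_ne
      strongly_stable_alternating[OF assms(1) rep_stable_strongly_stable(1)[OF assms(3)]]
      finite_subset[OF inner] by (simp flip: of_nat_sum)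
  finally show ?thesis
    using sum_count_in_halving[OF assms(1,2) rep_stable_halving[OF assms]] count_in_rep_stable[OF assms(3)]
    by simp
qed

section \<open>Size and inner depth of (k,r)-trees\<close>

lemma lab_inorder: "inorder (lab t i) = [i..<i + size t]"
proof (induction t arbitrary: i)
  case (Node l u r)
  have "[i..<i + size l + (1 + size r)] = [i..<i + size l] @ [i + size l..<i + size l + (1 + size r)]"
    by (rule upt_add_eq_append) simp
  moreover have "[i + size l..<i + size l + (1 + size r)] = (i + size l) # [i + size l + 1..<i + size l + (1 + size r)]"
    using upt_conv_Cons[of "i + size l" "i + size l + (1 + size r)"] by simp
  ultimately have "[i..<i + size (Node l u r)] = [i..<i + size l] @ (i + size l) # [i + size l + 1..<i + size l + 1 + size r]"
    by (simp add: add.assoc)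
  then show ?case using Node by simp
qed simp

lemma lab_size[simp]: "size (lab t i) = size t"
  by (induction t arbitrary: i) auto

lemma lab_Leaf_iff[simp]: "lab t i = Leaf \<longleftrightarrow> t = Leaf"
  by (cases t) auto

lemma full_lab[simp]: "full (lab t i) = full t"
  by (induction t arbitrary: i) auto

lemma inner_depth_lab[simp]: "inner_depth (lab t i) = inner_depth t"
  by (induction t arbitrary: i) auto

lemma bst_lab: "bst (lab t i)"
  unfolding bst_iff_sorted_wrt_less lab_inorder by (simp add: sorted_wrt_iff_nth_less)

lemma bst_kr_tree: "bst (kr_tree k r)"
  unfolding kr_tree_def by (rule bst_lab)

lemma chain_not_Leaf[simp]: "chain i S \<noteq> Leaf"
  by (cases i) auto

lemma kr_shape_not_Leaf[simp]: "kr_shape k r \<noteq> Leaf"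
  by (cases r) auto

lemma full_chain: "full S \<Longrightarrow> S \<noteq> Leaf \<Longrightarrow> full (chain i S)"
  by (induction i) auto

lemma full_kr_tree: "full (kr_tree k r)"
proof -
  have "full (kr_shape k r)" by (induction r) (auto intro: full_chain)
  then show ?thesis by (simp add: kr_tree_def)
qed

lemma size_chain: "size (chain i S) = 1 + i * (1 + size S)"
  by (induction i) auto

lemma size_kr_shape_Suc: "k \<ge> 1 \<Longrightarrow> size (kr_shape k (Suc r)) + 1 = k * (size (kr_shape k r) + 1) + 2"
  by (cases k) (auto simp: size_chain algebra_simps)

lemma size_kr_shape_bounds:
  "k \<ge> 1 \<Longrightarrow> 2 * k ^ r \<le> size (kr_shape k r) + 1 \<and> size (kr_shape k r) + 1 \<le> 2 * (k + 1) ^ r"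
proof (induction r)
  case (Suc r)
  let ?N = "size (kr_shape k r) + 1"
  have "2 * k ^ Suc r = k * (2 * k ^ r)" by simp
  also have "\<dots> \<le> k * ?N" using Suc by (intro mult_le_mono2) simp
  finally have "2 * k ^ Suc r \<le> k * ?N" .
  moreover have "k * ?N + 2 \<le> (k + 1) * ?N"
    using kr_shape_not_Leaf[of k r] by (cases "kr_shape k r") auto
  moreover have "(k + 1) * ?N \<le> (k + 1) * (2 * (k + 1) ^ r)" using Suc by (intro mult_le_mono2) simp
  moreover have "(k + 1) * (2 * (k + 1) ^ r) = 2 * (k + 1) ^ Suc r" by simp
  ultimately show ?case using size_kr_shape_Suc[OF Suc.prems, of r] by linarith
qed simp

lemma size_kr_tree_bounds:
  assumes "k \<ge> 1"
  shows "real k ^ r \<le> real (size (kr_tree k r))" "real (size (kr_tree k r)) \<le> 2 * (real k + 1) ^ r"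
proof -
  have "1 \<le> k ^ r" using assms by simp
  then have "k ^ r \<le> size (kr_tree k r)" "size (kr_tree k r) \<le> 2 * (k + 1) ^ r"
    using size_kr_shape_bounds[OF assms, of r] unfolding kr_tree_def by auto
  then have "real (k ^ r) \<le> real (size (kr_tree k r))" "real (size (kr_tree k r)) \<le> real (2 * (k + 1) ^ r)"
    by (simp_all only: of_nat_le_iff)
  then show "real k ^ r \<le> real (size (kr_tree k r))" "real (size (kr_tree k r)) \<le> 2 * (real k + 1) ^ r"
    by (simp_all add: add.commute)
qed

lemma inner_depth_chain: "S \<noteq> Leaf \<Longrightarrow> inner_depth (chain i S) = (2 + inner_depth S) * (1 - (1/2) ^ i)"
  by (induction i) (auto simp: field_simps)

lemma inner_depth_kr_shape:
  assumes "k \<ge> 1"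
  shows "inner_depth (kr_shape k r) = (2 ^ (k + 1) - 2) * (1 - (1 - (1/2) ^ k) ^ r)"
proof (induction r)
  case (Suc r)
  obtain j where j: "k = Suc j" using assms by (cases k) auto
  let ?q = "1 - (1/2::real) ^ k"
  have "inner_depth (kr_shape k (Suc r)) = (2 + inner_depth (kr_shape k r)) * ?q"
    by (simp add: inner_depth_chain j field_simps)
  also have "\<dots> = (2 ^ (k + 1) - 2) * (1 - ?q ^ Suc r)"
    unfolding Suc by (simp add: j field_simps)
  finally show ?case .
qed simp

lemma one_minus_pow_pow_le_half: "(1 - (1/2::real) ^ k) ^ (2 ^ k) \<le> 1/2"
proof -
  let ?h = "(1/2::real) ^ k"
  have "(1 - ?h) ^ (2 ^ k) \<le> exp (- ?h) ^ (2 ^ k)"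
    using exp_ge_add_one_self[of "- ?h"] by (intro power_mono) (simp_all add: power_le_one)
  also have "\<dots> = exp (-1)" by (simp add: exp_of_nat_mult[symmetric] power_divide)
  also have "exp (-1::real) \<le> 1/2"
    using exp_ge_add_one_self[of 1] by (simp add: exp_minus field_simps)
  finally show ?thesis .
qed

lemma inner_depth_kr_tree_bounds:
  assumes "k \<ge> 1"
  shows "2 ^ k - 1 \<le> inner_depth (kr_tree k (2 ^ k))" "inner_depth (kr_tree k (2 ^ k)) \<le> 2 ^ (k + 1)"
proof -
  let ?q = "(1 - (1/2::real) ^ k) ^ (2 ^ k)"
  have W: "inner_depth (kr_tree k (2 ^ k)) = (2 ^ (k + 1) - 2) * (1 - ?q)"
    unfolding kr_tree_def using inner_depth_kr_shape[OF assms] by simp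
  have "0 \<le> ?q" by (simp add: power_le_one)
  moreover have "?q \<le> 1/2" by (rule one_minus_pow_pow_le_half)
  moreover have "(2::real) \<le> 2 ^ (k + 1)" using power_increasing[of 1 "k + 1" "2::real"] by simp
  ultimately have "(2 ^ (k + 1) - 2) * (1/2) \<le> inner_depth (kr_tree k (2 ^ k))"
    "inner_depth (kr_tree k (2 ^ k)) \<le> (2 ^ (k + 1) - 2) * 1"
    unfolding W by (intro mult_left_mono; simp)+
  then show "2 ^ k - 1 \<le> inner_depth (kr_tree k (2 ^ k))" "inner_depth (kr_tree k (2 ^ k)) \<le> 2 ^ (k + 1)"
    by simp_all
qed

section \<open>Iterated logarithms of the tree size\<close>

lemma log2_ge_2: "(4::real) \<le> x \<Longrightarrow> 2 \<le> log 2 x"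
proof -
  assume "4 \<le> x"
  then have "log 2 4 \<le> log 2 x" by (subst log_le_cancel_iff) auto
  moreover have "log 2 (4::real) = 2" using log_pow_cancel[of "2::real" 2] by simp
  ultimately show ?thesis by simp
qed

lemma log2_le_self: "1 \<le> k \<Longrightarrow> log 2 (real k) \<le> real k"
proof -
  assume "1 \<le> k"
  have "k \<le> 2 ^ k" using less_exp[of k] by simp
  then have "real k \<le> 2 ^ k" by (metis of_nat_le_iff of_nat_numeral of_nat_power)
  then have "log 2 (real k) \<le> log 2 (2 ^ k)" using \<open>1 \<le> k\<close> by (subst log_le_cancel_iff) auto
  then show ?thesis by (simp add: log_pow_cancel)
qed

lemma log_kr_size_bounds:
  fixes n :: real
  assumes k: "k \<ge> 4" and lo: "real k ^ 2 ^ k \<le> n" and hi: "n \<le> 2 * (real k + 1) ^ 2 ^ k"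
  shows "2 ^ k * log 2 k \<le> log 2 n" "log 2 n \<le> 2 * 2 ^ k * log 2 k"
proof -
  have kpos: "real k > 0" and lk: "2 \<le> log 2 k" using k log2_ge_2[of k] by simp_all
  have npos: "n > 0" using lo kpos by (meson less_le_trans zero_less_power)
  have "log 2 (real k ^ 2 ^ k) \<le> log 2 n" using lo kpos npos by (subst log_le_cancel_iff) auto
  then show "2 ^ k * log 2 k \<le> log 2 n" using kpos by (simp add: log_nat_power)
  have "log 2 n \<le> log 2 (2 * (real k + 1) ^ 2 ^ k)" using hi npos by (subst log_le_cancel_iff) auto
  also have "\<dots> = 1 + 2 ^ k * log 2 (real k + 1)" by (simp add: log_mult log_nat_power)
  also have "log 2 (real k + 1) \<le> log 2 (2 * real k)" using kpos by (subst log_le_cancel_iff) auto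
  also have "log 2 (2 * real k) = 1 + log 2 k" using kpos by (simp add: log_mult)
  also have "1 + 2 ^ k * (1 + log 2 k) \<le> 2 * 2 ^ k * log 2 k"
  proof -
    have "2 ^ k * 1 \<le> 2 ^ k * (log 2 k - 1)" using lk by (intro mult_left_mono) auto
    then have "2 * 2 ^ k \<le> 2 ^ k * log 2 k" by (simp add: algebra_simps)
    moreover have "(1::real) \<le> 2 ^ k" by simp
    moreover have "1 + 2 ^ k * (1 + log 2 k) = 1 + 2 ^ k + 2 ^ k * log 2 k"
      "2 * 2 ^ k * log 2 k = 2 ^ k * log 2 k + 2 ^ k * log 2 k" by (simp_all add: algebra_simps)
    ultimately show ?thesis by linarith
  qed
  finally show "log 2 n \<le> 2 * 2 ^ k * log 2 k" by simp
qed

text \<open>Since lg lg (2^k lg k) = lg (k + lg lg k) is between lg k and 2 lg k.\<close>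
lemma log_log_bounds:
  fixes L :: real
  assumes k: "k \<ge> 4" and lo: "2 ^ k * log 2 k \<le> L" and hi: "L \<le> 2 * 2 ^ k * log 2 k"
  shows "log 2 k \<le> log 2 (log 2 L)" "log 2 (log 2 L) \<le> 2 * log 2 k"
proof -
  have kpos: "real k > 0" and lk: "2 \<le> log 2 k" using k log2_ge_2[of k] by simp_all
  have lkk: "log 2 k \<le> real k" using k log2_le_self by simp
  have "0 < 2 ^ k * log 2 k" using lk by simp
  then have Lpos: "L > 0" using lo by linarith
  have "1 \<le> log 2 (log 2 k)" using lk by (subst le_log_iff) auto
  moreover have "log 2 (2 ^ k * log 2 k) \<le> log 2 L" using lo lk Lpos by (subst log_le_cancel_iff) auto
  moreover have "log 2 (2 ^ k * log 2 k) = real k + log 2 (log 2 k)" using lk by (simp add: log_mult)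
  ultimately have LL1: "real k + 1 \<le> log 2 L" by linarith
  have "log 2 L \<le> log 2 (2 * 2 ^ k * log 2 k)" using hi lk Lpos by (subst log_le_cancel_iff) auto
  moreover have "log 2 (2 * 2 ^ k * log 2 k) = 1 + real k + log 2 (log 2 k)" using lk by (simp add: log_mult)
  moreover have "log 2 (log 2 k) \<le> log 2 k" using lkk lk kpos by (subst log_le_cancel_iff) auto
  ultimately have LL2: "log 2 L \<le> 4 * real k" using lkk k by linarith
  show "log 2 k \<le> log 2 (log 2 L)" using LL1 kpos by (subst log_le_cancel_iff) auto
  have "log 2 (log 2 L) \<le> log 2 (4 * real k)" using LL1 LL2 kpos by (subst log_le_cancel_iff) auto
  also have "\<dots> = 2 + log 2 k" using kpos log_pow_cancel[of 2 2] by (simp add: log_mult)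
  finally show "log 2 (log 2 L) \<le> 2 * log 2 k" using lk by linarith
qed

lemma log_over_log_log_log_bounds:
  fixes n :: real
  assumes "k \<ge> 4" "real k ^ 2 ^ k \<le> n" "n \<le> 2 * (real k + 1) ^ 2 ^ k"
  shows "2 ^ (k - 1) \<le> log 2 n / log 2 (log 2 (log 2 n))"
    "log 2 n / log 2 (log 2 (log 2 n)) \<le> 2 ^ (k + 1)"
proof -
  note L = log_kr_size_bounds[OF assms] and LLL = log_log_bounds[OF assms(1) L]
  have lk: "2 \<le> log 2 k" using assms(1) log2_ge_2[of k] by simp
  have "2 ^ k * log 2 k / (2 * log 2 k) \<le> log 2 n / log 2 (log 2 (log 2 n))"
    using L LLL lk by (intro frac_le) auto
  moreover have "2 ^ k * log 2 k / (2 * log 2 k) = (2::real) ^ (k - 1)"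
    using lk assms(1) by (cases k) (auto simp: field_simps)
  ultimately show "2 ^ (k - 1) \<le> log 2 n / log 2 (log 2 (log 2 n))" by simp
  have "log 2 n / log 2 (log 2 (log 2 n)) \<le> 2 * 2 ^ k * log 2 k / log 2 k"
    using L LLL lk by (intro frac_le) auto
  then show "log 2 n / log 2 (log 2 (log 2 n)) \<le> 2 ^ (k + 1)" using lk by simp
qed

lemma opt_cost_kr_tree_bounds:
  assumes k: "4 \<le> k" and atomic: "atomic_seq (kr_tree k (2 ^ k)) X"
  defines "n \<equiv> real (size (kr_tree k (2 ^ k)))"
  defines "g \<equiv> real (length X) * log 2 n / log 2 (log 2 (log 2 n))"
  shows "1/8 * g \<le> real (opt_cost (kr_tree k (2 ^ k)) X) \<and> real (opt_cost (kr_tree k (2 ^ k)) X) \<le> 8 * g"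
proof -
  define m where "m = real (length X)"
  define A where "A = log 2 n / log 2 (log 2 (log 2 n))"
  define W where "W = inner_depth (kr_tree k (2 ^ k))"
  have "rep_stable (kr_tree k (2 ^ k)) X" using atomic unfolding atomic_seq_def by blast
  then have opt: "m * W / 2 \<le> real (opt_cost (kr_tree k (2 ^ k)) X)"
    "real (opt_cost (kr_tree k (2 ^ k)) X) \<le> m * (W + 1)"
    using opt_cost_rep_stable_lower opt_cost_rep_stable_upper bst_kr_tree full_kr_tree
    unfolding m_def W_def by blast+
  have W: "2 ^ k - 1 \<le> W" "W \<le> 2 ^ (k + 1)"
    using inner_depth_kr_tree_bounds k unfolding W_def by auto
  have A: "2 ^ (k - 1) \<le> A" "A \<le> 2 ^ (k + 1)"
    using log_over_log_log_log_bounds[OF k] size_kr_tree_bounds[of k "2 ^ k"] k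
    unfolding A_def n_def by auto
  obtain p :: real where p: "2 ^ (k - 1) = p" "2 ^ k = 2 * p" "2 ^ (k + 1) = 4 * p" "1 \<le> p"
    using k by (cases k) auto
  have "A / 8 \<le> W / 2" "W + 1 \<le> 8 * A" using A W p(4) unfolding p by linarith+
  moreover have "m \<ge> 0" unfolding m_def by simp
  ultimately have "m * (A / 8) \<le> m * (W / 2)" "m * (W + 1) \<le> m * (8 * A)"
    by (meson mult_left_mono)+
  moreover have "1/8 * g = m * (A / 8)" "m * W / 2 = m * (W / 2)" "8 * g = m * (8 * A)"
    unfolding g_def m_def A_def by simp_all
  ultimately show ?thesis using opt by linarith
qed

theorem lemma10:
  shows "\<exists>c1 c2 K. c1 > 0 \<and> c2 > 0 \<and>
    (\<forall>k r X. 2 \<le> k \<and> K \<le> k \<and> r = 2 ^ k \<and> atomic_seq (kr_tree k r) X \<longrightarrow>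
       (let n = real (size (kr_tree k r));
            m = real (length X);
            g = m * log 2 n / log 2 (log 2 (log 2 n))
        in c1 * g \<le> real (opt_cost (kr_tree k r) X) \<and>
           real (opt_cost (kr_tree k r) X) \<le> c2 * g))"
proof -
  have "\<forall>k r X. 2 \<le> k \<and> 4 \<le> k \<and> r = 2 ^ k \<and> atomic_seq (kr_tree k r) X \<longrightarrow>
       (let n = real (size (kr_tree k r));
            m = real (length X);
            g = m * log 2 n / log 2 (log 2 (log 2 n))
        in 1/8 * g \<le> real (opt_cost (kr_tree k r) X) \<and>
           real (opt_cost (kr_tree k r) X) \<le> 8 * g)"
    unfolding Let_def using opt_cost_kr_tree_bounds by blast
  moreover have "(0::real) < 1/8" "(0::real) < 8" by simp_all
  ultimately show ?thesis by blast
qed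

end
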